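(* Let $T$ be a spherically homogeneous rooted tree in which every vertex has at least $2$ children, and let $G\le\mathrm{Aut}~T$ be a weakly branch group admitting a finitely generated non-trivial normal subgroup $N$ of infinite index in $G$. Then $G$ does not have property $\mathrm{(LR)}$.
   Context: $\mathrm{Aut}~T$ is the group of automorphisms of $T$ fixing the root; $\mathcal{L}_n$ is the $n$th level; $T_v$ is the subtree of descendants of $v$. For $G\le\mathrm{Aut}~T$, $\mathrm{rist}_G(v)$ is the subgroup of elements of $G$ fixing every vertex outside $T_v$, and $\mathrm{Rist}_G(n)=\prod_{v\in\mathcal{L}_n}\mathrm{rist}_G(v)$. $G$ is weakly branch if it acts transitively on every level of $T$ and $\mathrm{Rist}_G(n)$ is infinite for every $n\ge1$. $H\le G$ is a virtual retract of $G$ if there is a finite-index $K\le G$ containing $H$ and a homomorphism $K\to H$ restricting to the identity on $H$; $G$ has $\mathrm{(LR)}$ if every finitely generated subgroup of $G$ is a virtual retract of $G$. *)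

theory Defs
  imports "HOL-Algebra.Algebra"
begin

text \<open>Spherically homogeneous rooted tree with branching sequence m:
 the vertices of level n are the words v of length n with v!i < m i;
 the root is the empty word; u and w are adjacent iff one is obtained from the other
 by appending one letter.\<close>

definition level :: "(nat \<Rightarrow> nat) \<Rightarrow> nat \<Rightarrow> nat list set" where
  "level m n = {v. length v = n \<and> (\<forall>i<n. v ! i < m i)}"

definition verts :: "(nat \<Rightarrow> nat) \<Rightarrow> nat list set" where
  "verts m = (\<Union>n. level m n)"

definition adj :: "nat list \<Rightarrow> nat list \<Rightarrow> bool" where
  "adj u w \<longleftrightarrow> (\<exists>i. w = u @ [i]) \<or> (\<exists>i. u = w @ [i])"

text \<open>Automorphisms of the rooted tree fixing the root (extended by the identity
 outside the vertex set so that equality of functions is equality of automorphisms).\<close>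

definition tree_auts :: "(nat \<Rightarrow> nat) \<Rightarrow> (nat list \<Rightarrow> nat list) set" where
  "tree_auts m = {f. bij_betw f (verts m) (verts m) \<and> f [] = []
      \<and> (\<forall>u\<in>verts m. \<forall>w\<in>verts m. adj u w \<longleftrightarrow> adj (f u) (f w))
      \<and> (\<forall>x. x \<notin> verts m \<longrightarrow> f x = x)}"

definition AutT :: "(nat \<Rightarrow> nat) \<Rightarrow> (nat list \<Rightarrow> nat list) monoid" where
  "AutT m = \<lparr>carrier = tree_auts m, monoid.mult = (\<lambda>f g. f \<circ> g), one = id\<rparr>"

definition subtree :: "(nat \<Rightarrow> nat) \<Rightarrow> nat list \<Rightarrow> nat list set" where
  "subtree m v = {x \<in> verts m. (\<exists>w. x = v @ w)}"

definition rist :: "(nat \<Rightarrow> nat) \<Rightarrow> (nat list \<Rightarrow> nat list) set \<Rightarrow> nat list \<Rightarrow> (nat list \<Rightarrow> nat list) set" where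
  "rist m G v = {g \<in> G. \<forall>x \<in> verts m - subtree m v. g x = x}"

text \<open>Rist_G(n): the (internal direct) product of the rigid stabilisers of level n,
 i.e. the subgroup they generate.\<close>
definition Rist :: "(nat \<Rightarrow> nat) \<Rightarrow> (nat list \<Rightarrow> nat list) set \<Rightarrow> nat \<Rightarrow> (nat list \<Rightarrow> nat list) set" where
  "Rist m G n = generate (AutT m) (\<Union>v \<in> level m n. rist m G v)"

definition weakly_branch :: "(nat \<Rightarrow> nat) \<Rightarrow> (nat list \<Rightarrow> nat list) set \<Rightarrow> bool" where
  "weakly_branch m G \<longleftrightarrow>
     (\<forall>n. \<forall>u\<in>level m n. \<forall>w\<in>level m n. \<exists>g\<in>G. g u = w)
     \<and> (\<forall>n\<ge>1. infinite (Rist m G n))"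

definition fin_gen_subgroup :: "('a, 'b) monoid_scheme \<Rightarrow> 'a set \<Rightarrow> bool" where
  "fin_gen_subgroup Gr H \<longleftrightarrow> (\<exists>S. finite S \<and> S \<subseteq> carrier Gr \<and> H = generate Gr S)"

definition virtual_retract :: "('a, 'b) monoid_scheme \<Rightarrow> 'a set \<Rightarrow> bool" where
  "virtual_retract Gr H \<longleftrightarrow> (\<exists>K. subgroup K Gr \<and> H \<subseteq> K \<and> finite (rcosets\<^bsub>Gr\<^esub> K)
      \<and> (\<exists>\<phi> \<in> hom (Gr\<lparr>carrier := K\<rparr>) (Gr\<lparr>carrier := H\<rparr>). \<forall>h\<in>H. \<phi> h = h))"

definition has_LR :: "('a, 'b) monoid_scheme \<Rightarrow> bool" where
  "has_LR Gr \<longleftrightarrow> (\<forall>H. subgroup H Gr \<and> fin_gen_subgroup Gr H \<longrightarrow> virtual_retract Gr H)"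

end

theory Submission
  imports Defs
begin

text \<open>
  Suppose (LR) holds. Then N is a virtual retract: there are K \<supseteq> N of finite index and a
  retraction \<phi> : K \<rightarrow> N. As N has infinite index, K contains some l \<notin> N, and
  c = l \<phi>(l)\<inverse> is a nontrivial element of ker \<phi>. For n \<in> N the commutator [c, n] lies in N
  (normality) and in ker \<phi>, so it is trivial: c centralises N. (Finite generation of N is only
  needed to make N subject to (LR).)

  In a weakly branch group this is impossible. Let v be a vertex moved by c and by some g \<in> N
  (level transitivity and conjugation in N provide one). For 1 \<noteq> h \<in> rist(v) the commutator
  x = [g, h\<inverse>] lies in N, acts as h on T_v and trivially outside T_v \<union> T_(g v). Since c
  commutes with x it permutes the vertices moved by x; applying this to a vertex p of T_v moved
  by h shows c p \<in> T_(g v), hence c v = g v. Now the same statement for p and x in place of v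
  and g gives c p = x p = h p \<in> T_v, contradicting c p \<in> T_(c v) with c v \<noteq> v.
\<close>

lemma (in group) retraction_kernel_commutes:
  assumes K: "subgroup K G" and N: "N \<lhd> G" "N \<subseteq> K"
    and \<phi>: "\<phi> \<in> hom (G\<lparr>carrier := K\<rparr>) (G\<lparr>carrier := N\<rparr>)" "\<And>h. h \<in> N \<Longrightarrow> \<phi> h = h"
    and c: "c \<in> K" "\<phi> c = \<one>" and n: "n \<in> N"
  shows "c \<otimes> n = n \<otimes> c"
proof -
  interpret N: normal N G by (rule N(1))
  interpret \<phi>: group_hom "G\<lparr>carrier := K\<rparr>" "G\<lparr>carrier := N\<rparr>" \<phi>
    using K N.subgroup_axioms \<phi>(1) is_group
    by (simp add: group_hom_def group_hom_axioms_def subgroup.subgroup_is_group)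
  have nK: "n \<in> K" "inv n \<in> K" using n N(2) N.m_inv_closed by auto
  have cG: "c \<in> carrier G" using c(1) subgroup.subset[OF K] by blast
  have "\<phi> (inv c) = \<one>"
    using \<phi>.hom_inv[of c] c K N.subgroup_axioms by simp
  moreover have "\<phi> (inv n) = inv n" using \<phi>(2) n N.m_inv_closed by blast
  ultimately have "\<phi> (c \<otimes> n \<otimes> inv c \<otimes> inv n) = \<phi> c \<otimes> \<phi> n \<otimes> \<one> \<otimes> inv n"
    using c(1) nK subgroup.m_inv_closed[OF K] subgroup.m_closed[OF K] \<phi>.hom_mult by simp
  also have "\<dots> = \<one>" using c(2) \<phi>(2)[OF n] N.mem_carrier[OF n] by simp
  finally have "\<phi> (c \<otimes> n \<otimes> inv c \<otimes> inv n) = \<one>" .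
  moreover have "c \<otimes> n \<otimes> inv c \<otimes> inv n \<in> N"
    using N.inv_op_closed2[OF cG n] N.m_inv_closed[OF n] N.m_closed by blast
  ultimately have "c \<otimes> n \<otimes> inv c \<otimes> inv n = \<one>" using \<phi>(2) by simp
  then show ?thesis using cG N.mem_carrier[OF n] by (simp add: inv_solve_right')
qed

lemma (in group) normal_virtual_retract_centralizer:
  assumes N: "N \<lhd> G" and retract: "virtual_retract G N" and index: "infinite (rcosets N)"
  obtains c where "c \<in> carrier G" "c \<noteq> \<one>" "\<And>n. n \<in> N \<Longrightarrow> c \<otimes> n = n \<otimes> c"
proof -
  interpret N: normal N G by (rule N)
  obtain K \<phi> where K: "subgroup K G" "N \<subseteq> K" "finite (rcosets K)"
    and \<phi>: "\<phi> \<in> hom (G\<lparr>carrier := K\<rparr>) (G\<lparr>carrier := N\<rparr>)" "\<And>h. h \<in> N \<Longrightarrow> \<phi> h = h"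
    using retract unfolding virtual_retract_def by blast
  have "K \<noteq> N" using K(3) index by auto
  then obtain l where l: "l \<in> K" "l \<notin> N" using K(2) by blast
  have "\<phi> l \<in> N" using hom_in_carrier[OF \<phi>(1)] l(1) by simp
  define c where "c = l \<otimes> inv (\<phi> l)"
  have "c \<in> K"
    unfolding c_def using l(1) \<open>\<phi> l \<in> N\<close> K(2) subgroup.m_closed[OF K(1)] subgroup.m_inv_closed[OF K(1)]
    by blast
  have "inv (\<phi> l) \<in> N" using N.m_inv_closed \<open>\<phi> l \<in> N\<close> by blast
  then have "\<phi> c = \<phi> l \<otimes> inv (\<phi> l)"
    using hom_mult[OF \<phi>(1), of l "inv (\<phi> l)"] l(1) K(2) \<phi>(2) unfolding c_def by auto
  then have "\<phi> c = \<one>" using \<open>\<phi> l \<in> N\<close> by simp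
  have "l = c \<otimes> \<phi> l"
    using l(1) \<open>\<phi> l \<in> N\<close> subgroup.subset[OF K(1)] unfolding c_def by (force simp: m_assoc)
  then have "c \<noteq> \<one>" using l \<open>\<phi> l \<in> N\<close> by force
  then show ?thesis
    using that \<open>c \<in> K\<close> subgroup.subset[OF K(1)] retraction_kernel_commutes[OF K(1) N K(2) \<phi> \<open>c \<in> K\<close> \<open>\<phi> c = \<one>\<close>]
    by blast
qed

lemma mem_verts_iff: "x \<in> verts m \<longleftrightarrow> (\<forall>i<length x. x ! i < m i)"
  unfolding verts_def level_def by auto

lemma level_eq: "level m n = {x \<in> verts m. length x = n}"
  unfolding verts_def level_def by auto

lemma verts_appendD: "v @ w \<in> verts m \<Longrightarrow> v \<in> verts m"
  unfolding mem_verts_iff by (metis length_append nth_append trans_less_add1)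

lemma subtree_subset_verts: "subtree m v \<subseteq> verts m"
  unfolding subtree_def by blast

lemma subtree_root_in_verts: "q \<in> subtree m v \<Longrightarrow> v \<in> verts m"
  unfolding subtree_def using verts_appendD by blast

lemma subtree_same_length_eq:
  "q \<in> subtree m a \<Longrightarrow> q \<in> subtree m b \<Longrightarrow> length a = length b \<Longrightarrow> a = b"
  unfolding subtree_def by (auto dest: append_eq_append_conv[THEN iffD1, rotated])

lemma descendant_of_length:
  assumes "\<And>n. 0 < m n" and "v \<in> verts m" and "length v \<le> k"
  obtains w where "w \<in> subtree m v" "length w = k"
proof
  let ?w = "v @ replicate (k - length v) 0"
  show "?w \<in> subtree m v"
    using assms(1,2) unfolding subtree_def mem_verts_iff by (simp add: nth_append)
  show "length ?w = k" using assms(3) by simp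
qed

lemma tree_autsD:
  assumes "f \<in> tree_auts m"
  shows tree_aut_bij: "bij_betw f (verts m) (verts m)"
    and tree_aut_root: "f [] = []"
    and tree_aut_adj: "u \<in> verts m \<Longrightarrow> w \<in> verts m \<Longrightarrow> adj (f u) (f w) \<longleftrightarrow> adj u w"
    and tree_aut_outside: "x \<notin> verts m \<Longrightarrow> f x = x"
  using assms unfolding tree_auts_def mem_Collect_eq by (elim conjE; blast)+

lemma tree_aut_in_verts: "f \<in> tree_auts m \<Longrightarrow> x \<in> verts m \<Longrightarrow> f x \<in> verts m"
  by (rule bij_betw_apply[OF tree_aut_bij])

lemma tree_aut_inj: "f \<in> tree_auts m \<Longrightarrow> x \<in> verts m \<Longrightarrow> y \<in> verts m \<Longrightarrow> f x = f y \<Longrightarrow> x = y"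
  by (rule inj_onD[OF bij_betw_imp_inj_on[OF tree_aut_bij]])

lemma tree_aut_moves_only_verts: "f \<in> tree_auts m \<Longrightarrow> f x \<noteq> x \<Longrightarrow> x \<in> verts m"
  using tree_aut_outside by metis

text \<open>The image of a child is adjacent to the image of its parent, and it cannot be the parent
  of that image: by induction, that parent is already the image of the grandparent.\<close>
lemma tree_aut_snoc:
  assumes f: "f \<in> tree_auts m"
  shows "x @ [i] \<in> verts m \<Longrightarrow> \<exists>j. f (x @ [i]) = f x @ [j]"
proof (induction x arbitrary: i rule: rev_induct)
  case Nil
  have "[] \<in> verts m" using Nil verts_appendD[of "[]"] by simp
  then have "adj (f []) (f [i])"
    using tree_aut_adj[OF f _ Nil] by (simp add: adj_def)
  then show ?case using tree_aut_root[OF f] by (simp add: adj_def)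
next
  case (snoc k y)
  let ?x = "y @ [k]"
  have x: "?x \<in> verts m" using snoc.prems verts_appendD by blast
  obtain j' where j': "f ?x = f y @ [j']" using snoc.IH x by blast
  have "adj (f ?x) (f (?x @ [i]))"
    using tree_aut_adj[OF f x snoc.prems] by (simp add: adj_def)
  then consider j where "f (?x @ [i]) = f ?x @ [j]" | j where "f ?x = f (?x @ [i]) @ [j]"
    unfolding adj_def by blast
  then show ?case
  proof cases
    case (2 j)
    then have "f (?x @ [i]) = f y" using j' by simp
    then have "?x @ [i] = y"
      using tree_aut_inj[OF f snoc.prems] verts_appendD x by blast
    then show ?thesis by simp
  qed blast
qed

lemma tree_aut_append:
  assumes f: "f \<in> tree_auts m"
  shows "v @ w \<in> verts m \<Longrightarrow> \<exists>w'. f (v @ w) = f v @ w' \<and> length w' = length w"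
proof (induction w rule: rev_induct)
  case (snoc i w)
  then have "v @ w \<in> verts m" using verts_appendD[of "v @ w" "[i]"] by simp
  then obtain w' where "f (v @ w) = f v @ w'" "length w' = length w" using snoc.IH by blast
  moreover obtain j where "f (v @ w @ [i]) = f (v @ w) @ [j]"
    using tree_aut_snoc[OF f] snoc.prems by (metis append_assoc)
  ultimately show ?case by auto
qed simp

lemma tree_aut_length: "f \<in> tree_auts m \<Longrightarrow> x \<in> verts m \<Longrightarrow> length (f x) = length x"
  using tree_aut_append[of f m "[]" x] tree_aut_root by auto

lemma tree_aut_subtree: "f \<in> tree_auts m \<Longrightarrow> q \<in> subtree m v \<Longrightarrow> f q \<in> subtree m (f v)"
  unfolding subtree_def using tree_aut_append tree_aut_in_verts by blast

lemma tree_aut_fixes_ancestor: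
  assumes f: "f \<in> tree_auts m" and q: "q \<in> subtree m v" and "f q = q"
  shows "f v = v"
proof -
  have "f q \<in> subtree m (f v)" using tree_aut_subtree[OF f q] .
  moreover have "length (f v) = length v"
    using tree_aut_length[OF f subtree_root_in_verts[OF q]] .
  ultimately show ?thesis using q \<open>f q = q\<close> subtree_same_length_eq by metis
qed

lemma tree_aut_inverse:
  assumes f: "f \<in> tree_auts m"
  shows "\<exists>g \<in> tree_auts m. g \<circ> f = id"
proof
  define g where "g x = (if x \<in> verts m then inv_into (verts m) f x else x)" for x
  have bij: "bij_betw f (verts m) (verts m)" by (rule tree_aut_bij[OF f])
  have g_bij: "bij_betw g (verts m) (verts m)"
    using bij_betw_inv_into[OF bij] by (simp add: g_def cong: bij_betw_cong)
  have f_g: "f (g x) = x" if "x \<in> verts m" for x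
    using that bij by (simp add: g_def bij_betw_inv_into_right)
  show "g \<circ> f = id"
  proof
    fix x
    show "(g \<circ> f) x = id x"
    proof (cases "x \<in> verts m")
      case True
      then show ?thesis using bij tree_aut_in_verts[OF f] by (simp add: g_def bij_betw_inv_into_left)
    next
      case False
      then show ?thesis by (simp add: g_def tree_aut_outside[OF f])
    qed
  qed
  have "[] \<in> verts m" by (simp add: mem_verts_iff)
  then have "g [] = []"
    using bij_betw_inv_into_left[OF bij] tree_aut_root[OF f] by (metis g_def)
  moreover have "adj u w \<longleftrightarrow> adj (g u) (g w)" if "u \<in> verts m" "w \<in> verts m" for u w
    using that f_g tree_aut_adj[OF f, of "g u" "g w"] bij_betw_apply[OF g_bij] by simp
  moreover have "g x = x" if "x \<notin> verts m" for x
    using that by (simp add: g_def)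
  ultimately show "g \<in> tree_auts m"
    using g_bij unfolding tree_auts_def by blast
qed

lemma carrier_AutT [simp]: "carrier (AutT m) = tree_auts m"
  and mult_AutT [simp]: "f \<otimes>\<^bsub>AutT m\<^esub> g = f \<circ> g"
  and one_AutT [simp]: "\<one>\<^bsub>AutT m\<^esub> = id"
  by (simp_all add: AutT_def)

lemma id_in_tree_auts: "id \<in> tree_auts m"
  unfolding tree_auts_def by simp

lemma tree_auts_comp:
  assumes f: "f \<in> tree_auts m" and g: "g \<in> tree_auts m"
  shows "f \<circ> g \<in> tree_auts m"
proof -
  have "bij_betw (f \<circ> g) (verts m) (verts m)"
    using bij_betw_trans[OF tree_aut_bij[OF g] tree_aut_bij[OF f]] .
  moreover have "adj u w \<longleftrightarrow> adj ((f \<circ> g) u) ((f \<circ> g) w)" if "u \<in> verts m" "w \<in> verts m" for u w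
    using that tree_aut_adj[OF f] tree_aut_adj[OF g] tree_aut_in_verts[OF g] by simp
  ultimately show ?thesis
    using f g unfolding tree_auts_def by (simp add: tree_aut_root tree_aut_outside)
qed

lemma group_AutT: "group (AutT m)"
  by (rule groupI) (auto simp: id_in_tree_auts tree_auts_comp comp_assoc dest: tree_aut_inverse)

locale weakly_branch_group =
  fixes m :: "nat \<Rightarrow> nat" and G :: "(nat list \<Rightarrow> nat list) set"
  assumes has_children: "\<And>n. 0 < m n"
    and subgroup_G: "subgroup G (AutT m)"
    and weakly_branch_G: "weakly_branch m G"
begin

abbreviation \<Gamma> where "\<Gamma> \<equiv> (AutT m)\<lparr>carrier := G\<rparr>"

sublocale group \<Gamma>
  by (rule subgroup.subgroup_is_group[OF subgroup_G group_AutT])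

lemma inv_in_G: "f \<in> G \<Longrightarrow> inv\<^bsub>\<Gamma>\<^esub> f \<in> G"
  using inv_closed by simp

lemma comp_in_G: "f \<in> G \<Longrightarrow> g \<in> G \<Longrightarrow> f \<circ> g \<in> G"
  using m_closed by simp

lemma G_tree_auts: "f \<in> G \<Longrightarrow> f \<in> tree_auts m"
  using subgroup.subset[OF subgroup_G] by auto

lemma apply_inv [simp]:
  assumes "f \<in> G"
  shows "f ((inv\<^bsub>\<Gamma>\<^esub> f) x) = x" and "(inv\<^bsub>\<Gamma>\<^esub> f) (f x) = x"
  using fun_cong[OF r_inv[of f]] fun_cong[OF l_inv[of f]] assms by simp_all

lemma rist_fixes_root:
  assumes h: "h \<in> rist m G v" and v: "v \<in> verts m"
  shows "h v = v"
proof (rule ccontr)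
  assume moved: "h v \<noteq> v"
  have ht: "h \<in> tree_auts m" using h G_tree_auts unfolding rist_def by blast
  have hv: "h v \<in> verts m" using tree_aut_in_verts[OF ht v] .
  have "h v \<notin> subtree m v"
    using moved tree_aut_length[OF ht v] unfolding subtree_def by auto
  then have "h (h v) = h v" using h hv unfolding rist_def by blast
  then show False using moved tree_aut_inj[OF ht hv v] by blast
qed

lemma rist_subset: "rist m G v \<subseteq> G"
  unfolding rist_def by blast

lemma rist_moves_only_subtree:
  assumes "h \<in> rist m G v" "h q \<noteq> q"
  shows "q \<in> subtree m v"
  using assms tree_aut_moves_only_verts[OF G_tree_auts] rist_subset unfolding rist_def by blast

lemma rist_subtree:
  assumes h: "h \<in> rist m G v" and q: "q \<in> subtree m v"
  shows "h q \<in> subtree m v"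
  using tree_aut_subtree[OF G_tree_auts q] h rist_subset rist_fixes_root[OF h subtree_root_in_verts[OF q]]
  by force

lemma rist_inv:
  assumes h: "h \<in> rist m G v"
  shows "inv\<^bsub>\<Gamma>\<^esub> h \<in> rist m G v"
proof -
  have "h \<in> G" using h rist_subset by blast
  moreover have "(inv\<^bsub>\<Gamma>\<^esub> h) x = x" if "x \<in> verts m - subtree m v" for x
    using apply_inv(2)[OF \<open>h \<in> G\<close>, of x] h that unfolding rist_def by simp
  ultimately show ?thesis unfolding rist_def by (simp add: inv_in_G)
qed

lemma rist_conj:
  assumes f: "f \<in> G" and h: "h \<in> rist m G w"
  shows "f \<circ> h \<circ> inv\<^bsub>\<Gamma>\<^esub> f \<in> rist m G (f w)"
  unfolding rist_def
proof (intro CollectI conjI ballI)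
  show "f \<circ> h \<circ> inv\<^bsub>\<Gamma>\<^esub> f \<in> G"
    using f h rist_subset by (blast intro: comp_in_G inv_in_G)
  fix x assume x: "x \<in> verts m - subtree m (f w)"
  have "(inv\<^bsub>\<Gamma>\<^esub> f) x \<notin> subtree m w"
    using x tree_aut_subtree[OF G_tree_auts[OF f]] f by fastforce
  moreover have "(inv\<^bsub>\<Gamma>\<^esub> f) x \<in> verts m"
    using x tree_aut_in_verts[OF G_tree_auts[OF inv_in_G[OF f]]] by simp
  ultimately show "(f \<circ> h \<circ> inv\<^bsub>\<Gamma>\<^esub> f) x = x" using h f unfolding rist_def by simp
qed

lemma rist_nontrivial:
  assumes v: "v \<in> verts m" "v \<noteq> []"
  obtains h where "h \<in> rist m G v" "h \<noteq> id"
proof -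
  let ?n = "length v"
  have "\<exists>w\<in>level m ?n. \<exists>h\<in>rist m G w. h \<noteq> id"
  proof (rule ccontr)
    assume "\<not> ?thesis"
    then have "(\<Union>w\<in>level m ?n. rist m G w) \<subseteq> {id}" by blast
    then have "Rist m G ?n \<subseteq> {id}"
      unfolding Rist_def
      using group.generate_subgroup_incl[OF group_AutT _ group.triv_subgroup[OF group_AutT]] by simp
    moreover have "infinite (Rist m G ?n)"
      using weakly_branch_G v(2) unfolding weakly_branch_def by (simp add: Suc_le_eq)
    ultimately show False using finite_subset by blast
  qed
  then obtain w h where w: "w \<in> level m ?n" and h: "h \<in> rist m G w" "h \<noteq> id" by blast
  obtain f where f: "f \<in> G" "f w = v"
    using weakly_branch_G w v(1) unfolding weakly_branch_def level_eq by blast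
  have "f \<circ> h \<circ> inv\<^bsub>\<Gamma>\<^esub> f \<in> rist m G v" using rist_conj[OF f(1) h(1)] f(2) by simp
  moreover have "f \<circ> h \<circ> inv\<^bsub>\<Gamma>\<^esub> f \<noteq> id"
  proof
    assume conj_id: "f \<circ> h \<circ> inv\<^bsub>\<Gamma>\<^esub> f = id"
    have "h x = x" for x
    proof -
      have "f (h x) = f x" using fun_cong[OF conj_id, of "f x"] f(1) by simp
      then show ?thesis using apply_inv(2)[OF f(1)] by metis
    qed
    then show False using h(2) by auto
  qed
  ultimately show ?thesis using that by blast
qed

text \<open>Since \<open>y\<close> moves \<open>b\<close>, the subtrees at \<open>b\<close> and \<open>y b\<close> are disjoint; the conjugate of
  \<open>h\<inverse>\<close> by \<open>y\<close> lives on the second, so the commutator acts as \<open>h\<close> on the first.\<close>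
lemma commutator_rist:
  assumes y: "y \<in> G" and b: "b \<in> verts m" "y b \<noteq> b" and h: "h \<in> rist m G b"
  shows commutator_rist_inside: "q \<in> subtree m b \<Longrightarrow> (y \<circ> inv\<^bsub>\<Gamma>\<^esub> h \<circ> inv\<^bsub>\<Gamma>\<^esub> y \<circ> h) q = h q"
    and commutator_rist_outside: "z \<in> verts m \<Longrightarrow> z \<notin> subtree m b \<Longrightarrow> z \<notin> subtree m (y b)
      \<Longrightarrow> (y \<circ> inv\<^bsub>\<Gamma>\<^esub> h \<circ> inv\<^bsub>\<Gamma>\<^esub> y \<circ> h) z = z"
proof -
  have yt: "y \<in> tree_auts m" "inv\<^bsub>\<Gamma>\<^esub> y \<in> tree_auts m"
    using y G_tree_auts inv_in_G by auto
  have hi: "inv\<^bsub>\<Gamma>\<^esub> h \<in> rist m G b" using rist_inv[OF h] .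
  have not_below_b: "(inv\<^bsub>\<Gamma>\<^esub> y) x \<notin> subtree m b" if "x \<notin> subtree m (y b)" for x
    using that tree_aut_subtree[OF yt(1)] y by fastforce
  show "(y \<circ> inv\<^bsub>\<Gamma>\<^esub> h \<circ> inv\<^bsub>\<Gamma>\<^esub> y \<circ> h) q = h q" if q: "q \<in> subtree m b"
  proof -
    have hq: "h q \<in> subtree m b" using rist_subtree[OF h q] .
    have "h q \<notin> subtree m (y b)"
      using hq b subtree_same_length_eq tree_aut_length[OF yt(1) b(1)] by metis
    then have "(inv\<^bsub>\<Gamma>\<^esub> h) ((inv\<^bsub>\<Gamma>\<^esub> y) (h q)) = (inv\<^bsub>\<Gamma>\<^esub> y) (h q)"
      using hi not_below_b tree_aut_in_verts[OF yt(2) subtree_subset_verts[THEN subsetD, OF hq]]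
      unfolding rist_def by blast
    then show ?thesis using y by simp
  qed
  show "(y \<circ> inv\<^bsub>\<Gamma>\<^esub> h \<circ> inv\<^bsub>\<Gamma>\<^esub> y \<circ> h) z = z"
    if z: "z \<in> verts m" "z \<notin> subtree m b" "z \<notin> subtree m (y b)"
  proof -
    have "h z = z" using h z unfolding rist_def by blast
    moreover have "(inv\<^bsub>\<Gamma>\<^esub> h) ((inv\<^bsub>\<Gamma>\<^esub> y) z) = (inv\<^bsub>\<Gamma>\<^esub> y) z"
      using hi not_below_b[OF z(3)] tree_aut_in_verts[OF yt(2) z(1)] unfolding rist_def by blast
    ultimately show ?thesis using y by simp
  qed
qed

context
  fixes N
  assumes normal_N: "N \<lhd> \<Gamma>"
begin

lemma normal_subset_G: "N \<subseteq> G"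
  using normal_imp_subgroup[OF normal_N] subgroup.subset by force

lemma commutator_in_normal:
  assumes y: "y \<in> N" and h: "h \<in> G"
  shows "y \<circ> inv\<^bsub>\<Gamma>\<^esub> h \<circ> inv\<^bsub>\<Gamma>\<^esub> y \<circ> h \<in> N"
proof -
  interpret normal N \<Gamma> by (rule normal_N)
  have "inv\<^bsub>\<Gamma>\<^esub> h \<circ> inv\<^bsub>\<Gamma>\<^esub> y \<circ> h \<in> N"
    using inv_op_closed2[of "inv\<^bsub>\<Gamma>\<^esub> h" "inv\<^bsub>\<Gamma>\<^esub> y"] h y by (simp add: inv_in_G)
  then show ?thesis using m_closed[OF y] by (simp add: comp_assoc)
qed

context
  fixes c
  assumes c_in_G: "c \<in> G" and c_commutes: "\<And>n. n \<in> N \<Longrightarrow> c \<circ> n = n \<circ> c"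
begin

lemma centralizing_moves_like_normal:
  assumes b: "b \<in> verts m" "b \<noteq> []" "c b \<noteq> b" and y: "y \<in> N" "y b \<noteq> b"
  shows "c b = y b"
proof -
  have yG: "y \<in> G" using y(1) normal_subset_G by blast
  have ct: "c \<in> tree_auts m" and yt: "y \<in> tree_auts m"
    using c_in_G yG G_tree_auts by auto
  obtain h where h: "h \<in> rist m G b" "h \<noteq> id" using rist_nontrivial b by blast
  then obtain q where hq: "h q \<noteq> q" by (auto simp: fun_eq_iff)
  have hG: "h \<in> G" using h rist_subset by blast
  have q: "q \<in> subtree m b" using rist_moves_only_subtree[OF h(1) hq] .
  define x where "x = y \<circ> inv\<^bsub>\<Gamma>\<^esub> h \<circ> inv\<^bsub>\<Gamma>\<^esub> y \<circ> h"
  have "x \<in> N" unfolding x_def using commutator_in_normal y(1) hG .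
  have "x (c q) = c (h q)"
    using fun_cong[OF c_commutes[OF \<open>x \<in> N\<close>], of q]
      commutator_rist_inside[OF yG b(1) y(2) h(1) q]
    unfolding x_def by simp
  moreover have "c (h q) \<noteq> c q" using hq apply_inv(2)[OF c_in_G] by metis
  ultimately have moved: "x (c q) \<noteq> c q" by simp
  have cq: "c q \<in> subtree m (c b)" using tree_aut_subtree[OF ct q] .
  have "c q \<notin> subtree m b"
    using cq b subtree_same_length_eq tree_aut_length[OF ct b(1)] by metis
  then have "c q \<in> subtree m (y b)"
    using moved commutator_rist_outside[OF yG b(1) y(2) h(1)] subtree_subset_verts cq
    unfolding x_def by blast
  then show ?thesis
    using cq subtree_same_length_eq tree_aut_length[OF ct b(1)] tree_aut_length[OF yt b(1)] by metis
qed

lemma common_moved_vertex: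
  assumes "N \<noteq> {id}" "c \<noteq> id"
  obtains v g where "v \<in> verts m" "v \<noteq> []" "c v \<noteq> v" "g \<in> N" "g v \<noteq> v"
proof -
  interpret normal N \<Gamma> by (rule normal_N)
  have ct: "c \<in> tree_auts m" using c_in_G G_tree_auts by blast
  obtain u where u: "c u \<noteq> u" using assms(2) by (auto simp: fun_eq_iff)
  have "u \<in> verts m" "u \<noteq> []"
    using u tree_aut_moves_only_verts[OF ct] tree_aut_root[OF ct] by auto
  obtain g0 where g0: "g0 \<in> N" "g0 \<noteq> id" using assms(1) one_closed by auto
  have g0t: "g0 \<in> tree_auts m" using g0(1) normal_subset_G G_tree_auts by blast
  obtain w where w: "g0 w \<noteq> w" using g0(2) by (auto simp: fun_eq_iff)
  have "w \<in> verts m" using w tree_aut_moves_only_verts[OF g0t] by blast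
  let ?k = "max (length u) (length w)"
  obtain d where d: "d \<in> subtree m u" "length d = ?k"
    using descendant_of_length[OF has_children \<open>u \<in> verts m\<close>] by (metis max.cobounded1)
  obtain e where e: "e \<in> subtree m w" "length e = ?k"
    using descendant_of_length[OF has_children \<open>w \<in> verts m\<close>] by (metis max.cobounded2)
  have "c d \<noteq> d" using tree_aut_fixes_ancestor[OF ct d(1)] u by blast
  have "g0 e \<noteq> e" using tree_aut_fixes_ancestor[OF g0t e(1)] w by blast
  have "d \<in> level m ?k" "e \<in> level m ?k"
    using d e subtree_subset_verts unfolding level_eq by auto
  then obtain f where f: "f \<in> G" "f e = d"
    using weakly_branch_G unfolding weakly_branch_def by blast
  define g where "g = f \<circ> g0 \<circ> inv\<^bsub>\<Gamma>\<^esub> f"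
  have "g \<in> N" unfolding g_def using inv_op_closed2[OF _ g0(1)] f(1) by simp
  have "g d = f (g0 e)" unfolding g_def using f by (metis apply_inv(2) comp_apply)
  then have "g d \<noteq> d" using \<open>g0 e \<noteq> e\<close> f by (metis apply_inv(2))
  moreover have "d \<noteq> []" using d(2) \<open>u \<noteq> []\<close> by auto
  ultimately show ?thesis
    using that d(1) subtree_subset_verts \<open>c d \<noteq> d\<close> \<open>g \<in> N\<close> by blast
qed

lemma centralizer_of_normal_trivial:
  assumes "N \<noteq> {id}"
  shows "c = id"
proof (rule ccontr)
  assume "c \<noteq> id"
  then obtain v g where v: "v \<in> verts m" "v \<noteq> []" "c v \<noteq> v" and g: "g \<in> N" "g v \<noteq> v"
    using common_moved_vertex assms by metis
  have ct: "c \<in> tree_auts m" using c_in_G G_tree_auts by blast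
  have gG: "g \<in> G" using g(1) normal_subset_G by blast
  obtain h where h: "h \<in> rist m G v" "h \<noteq> id" using rist_nontrivial v(1,2) by blast
  then obtain p where hp: "h p \<noteq> p" by (auto simp: fun_eq_iff)
  have p: "p \<in> subtree m v" using rist_moves_only_subtree[OF h(1) hp] .
  have hG: "h \<in> G" using h(1) rist_subset by blast
  define x where "x = g \<circ> inv\<^bsub>\<Gamma>\<^esub> h \<circ> inv\<^bsub>\<Gamma>\<^esub> g \<circ> h"
  have "x \<in> N" unfolding x_def using commutator_in_normal g(1) hG .
  have xp: "x p = h p" unfolding x_def using commutator_rist_inside[OF gG v(1) g(2) h(1) p] .
  have "c p \<noteq> p" using tree_aut_fixes_ancestor[OF ct p] v(3) by blast
  moreover have "p \<in> verts m" "p \<noteq> []" using p v(2) subtree_subset_verts unfolding subtree_def by auto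
  moreover have "x p \<noteq> p" using xp hp by simp
  ultimately have "c p = x p" using centralizing_moves_like_normal \<open>x \<in> N\<close> by blast
  then have "c p = h p" using xp by simp
  then have "c p \<in> subtree m v" using rist_subtree[OF h(1) p] by simp
  then show False
    using tree_aut_subtree[OF ct p] subtree_same_length_eq tree_aut_length[OF ct v(1)] v(3) by metis
qed

end

end

end

theorem corollary3p4:
  fixes m :: "nat \<Rightarrow> nat" and G N :: "(nat list \<Rightarrow> nat list) set"
  assumes "\<forall>n. m n \<ge> 2"
    and "subgroup G (AutT m)"
    and "weakly_branch m G"
    and "N \<lhd> (AutT m)\<lparr>carrier := G\<rparr>"
    and "fin_gen_subgroup ((AutT m)\<lparr>carrier := G\<rparr>) N"
    and "N \<noteq> {id}"
    and "infinite (rcosets\<^bsub>(AutT m)\<lparr>carrier := G\<rparr>\<^esub> N)"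
  shows "\<not> has_LR ((AutT m)\<lparr>carrier := G\<rparr>)"
proof
  assume LR: "has_LR ((AutT m)\<lparr>carrier := G\<rparr>)"
  have "\<And>n. 0 < m n" using assms(1) by (metis not_numeral_le_zero not_gr_zero)
  then interpret weakly_branch_group m G by (rule weakly_branch_group.intro[OF _ assms(2,3)])
  have "virtual_retract \<Gamma> N"
    using LR assms(4,5) normal_imp_subgroup unfolding has_LR_def by blast
  then obtain c where "c \<in> G" "c \<noteq> id" "\<And>n. n \<in> N \<Longrightarrow> c \<circ> n = n \<circ> c"
    using normal_virtual_retract_centralizer[OF assms(4) _ assms(7)] by auto
  then show False using centralizer_of_normal_trivial[OF assms(4)] assms(6) by blast
qed

end
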